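(* Let $(G,c,\{r_1,\dots,r_R\},X)$ be an instance of \textsc{Multi-Rooted Directed Steiner Tree} with $G$ planar. Let $T=F\cup\bigcup_{j=1}^q T_{p_j}$ be a multi-rooted partial arborescence in $G$, where $T_{p_j}$ is a partial arborescence rooted at $r_{p_j}$, and let $C_1,\dots,C_h$ be the weakly connected components of $G\setminus T$. Let $I_{C_1},\dots,I_{C_h}$ be the subinstances induced by $(G,T,C_1,\dots,C_h)$, and let $\mathcal F_{C_i}$ be a feasible solution for $I_{C_i}$. Let $\mathcal F\subseteq E(G)$ be the set of edges of $G$ corresponding to $(E(T)\setminus F)\cup\bigcup_{i=1}^h\mathcal F_{C_i}$. Then $\mathcal F$ is a feasible solution for the instance, and $\mathrm{cost}(\mathcal F)=\mathrm{cost}(T\setminus F)+\sum_{i=1}^h\mathrm{cost}(\mathcal F_{C_i})$.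
   Context: MR-DST: digraph $G=(V,E)$ (parallel edges allowed) with costs $c_e\ge0$, roots $r_1,\dots,r_R$, terminals $X\subseteq V\setminus\{r_1,\dots,r_R\}$; feasible $F\subseteq E$: every terminal is reachable from some root via edges of $F$; cost $\sum_{e\in F}c_e$. A partial arborescence rooted at $r$ is a subgraph containing $r$ that is a directed tree oriented away from $r$. A multi-rooted partial arborescence is a subgraph $T=F\cup\bigcup_{j=1}^q T_{i_j}$ where $T_{i_1},\dots,T_{i_q}$ are vertex-disjoint partial arborescences rooted at roots $r_{i_1},\dots,r_{i_q}$, $F$ is a set of edges not in any $T_{i_j}$ with both endpoints in $\bigcup_j V(T_{i_j})$, and $T$ is weakly connected and contains no cycle in the undirected sense. $\mathrm{cost}(T\setminus F)$ is the total cost of edges of $T$ not in $F$. Induced subinstances: contract $T$ into a single new vertex $r_T$ to get $G_{\mathrm{contract}}$ (edges inherit costs from their originals in $G$); for each $i$, $I_{C_i}=(G_{\mathrm{contract}}[C_i\cup\{r_T\}],c,\{r_T\}\cup(C_i\cap(\{r_1,\dots,r_R\}\setminus\{r_{p_1},\dots,r_{p_q}\})),C_i\cap X)$. $G\setminus T$ deletes $T$'s vertices and incident edges; weakly connected components are components of the underlying undirected graph. *)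

theory Defs
  imports "HOL-Analysis.Analysis" "Graph_Theory.Graph_Theory"
begin

text \<open>Digraphs with parallel arcs are modelled by the Graph_Theory record pre_digraph
  (vertex set, arc set, tail, head).\<close>

text \<open>Planarity: a geometric embedding into the plane (complex numbers = R^2):
  distinct vertices go to distinct points, each arc to a simple path (a simple
  closed curve for a loop) between the images of its endpoints, that meets no other
  vertex point, and two distinct arcs meet only in common endpoints.\<close>
definition planar :: "('v,'e) pre_digraph \<Rightarrow> bool" where
  "planar G \<longleftrightarrow> (\<exists>(p :: 'v \<Rightarrow> complex) (\<gamma> :: 'e \<Rightarrow> real \<Rightarrow> complex).
     inj_on p (verts G) \<and>
     (\<forall>e\<in>arcs G. simple_path (\<gamma> e) \<and>
        pathstart (\<gamma> e) = p (tail G e) \<and> pathfinish (\<gamma> e) = p (head G e) \<and>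
        path_image (\<gamma> e) \<inter> p ` verts G \<subseteq> {p (tail G e), p (head G e)}) \<and>
     (\<forall>e\<in>arcs G. \<forall>e'\<in>arcs G. e \<noteq> e' \<longrightarrow>
        path_image (\<gamma> e) \<inter> path_image (\<gamma> e') \<subseteq> p ` ({tail G e, head G e} \<inter> {tail G e', head G e'})))"

definition mrdst_instance :: "('v,'e) pre_digraph \<Rightarrow> ('e \<Rightarrow> real) \<Rightarrow> 'v set \<Rightarrow> 'v set \<Rightarrow> bool" where
  "mrdst_instance G c Rts X \<longleftrightarrow> fin_digraph G \<and> (\<forall>e\<in>arcs G. c e \<ge> 0) \<and>
     Rts \<subseteq> verts G \<and> X \<subseteq> verts G - Rts"

definition mrdst_feasible :: "('v,'e) pre_digraph \<Rightarrow> 'v set \<Rightarrow> 'v set \<Rightarrow> 'e set \<Rightarrow> bool" where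
  "mrdst_feasible G Rts X F \<longleftrightarrow> F \<subseteq> arcs G \<and>
     (\<forall>x\<in>X. \<exists>r\<in>Rts. r \<rightarrow>\<^sup>*\<^bsub>G\<lparr>arcs := F\<rparr>\<^esub> x)"

definition cost :: "('e \<Rightarrow> real) \<Rightarrow> 'e set \<Rightarrow> real" where
  "cost c F = (\<Sum>e\<in>F. c e)"

definition uconn :: "('v,'e) pre_digraph \<Rightarrow> 'e set \<Rightarrow> ('v \<times> 'v) set" where
  "uconn H Es = (\<Union>e\<in>Es. {(tail H e, head H e), (head H e, tail H e)})\<^sup>*"

definition u_acyclic :: "('v,'e) pre_digraph \<Rightarrow> bool" where
  "u_acyclic H \<longleftrightarrow> (\<forall>e\<in>arcs H. tail H e \<noteq> head H e \<and>
      (tail H e, head H e) \<notin> uconn H (arcs H - {e}))"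

definition partial_arb :: "('v,'e) pre_digraph \<Rightarrow> ('v,'e) pre_digraph \<Rightarrow> 'v \<Rightarrow> bool" where
  "partial_arb G A r \<longleftrightarrow> subgraph A G \<and> r \<in> verts A \<and> connected A \<and> u_acyclic A \<and>
     (\<forall>v\<in>verts A. r \<rightarrow>\<^sup>*\<^bsub>A\<^esub> v)"

definition mr_graph :: "('v,'e) pre_digraph \<Rightarrow> 'v set \<Rightarrow> ('v \<Rightarrow> ('v,'e) pre_digraph) \<Rightarrow> 'e set
    \<Rightarrow> ('v,'e) pre_digraph" where
  "mr_graph G P A F = \<lparr> verts = (\<Union>p\<in>P. verts (A p)), arcs = F \<union> (\<Union>p\<in>P. arcs (A p)),
     tail = tail G, head = head G \<rparr>"

text \<open>Multi-rooted partial arborescence with root set P (the roots r_{p_1},...,r_{p_q}),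
  arborescences A p and extra arc set F.\<close>
definition mr_partial_arb :: "('v,'e) pre_digraph \<Rightarrow> 'v set \<Rightarrow> 'v set \<Rightarrow> ('v \<Rightarrow> ('v,'e) pre_digraph)
    \<Rightarrow> 'e set \<Rightarrow> bool" where
  "mr_partial_arb G Rts P A F \<longleftrightarrow> P \<subseteq> Rts \<and> P \<noteq> {} \<and>
     (\<forall>p\<in>P. partial_arb G (A p) p) \<and>
     (\<forall>p\<in>P. \<forall>p'\<in>P. p \<noteq> p' \<longrightarrow> verts (A p) \<inter> verts (A p') = {}) \<and>
     F \<subseteq> arcs G \<and> (\<forall>p\<in>P. F \<inter> arcs (A p) = {}) \<and>
     (\<forall>e\<in>F. tail G e \<in> (\<Union>p\<in>P. verts (A p)) \<and> head G e \<in> (\<Union>p\<in>P. verts (A p))) \<and>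
     connected (mr_graph G P A F) \<and> u_acyclic (mr_graph G P A F)"

definition weak_components :: "('v,'e) pre_digraph \<Rightarrow> 'v set set" where
  "weak_components H = {{v\<in>verts H. (u, v) \<in> uconn H (arcs H)} | u. u \<in> verts H}"

definition del_verts :: "('v,'e) pre_digraph \<Rightarrow> 'v set \<Rightarrow> ('v,'e) pre_digraph" where
  "del_verts G S = G \<restriction> (verts G - S)"

text \<open>Contraction of the vertex set S into the new vertex None (= r_T); other vertices v
  become Some v; arcs keep their identity (and hence their cost); arcs with both
  endpoints in S (which would become loops) are removed.\<close>
definition contract :: "('v,'e) pre_digraph \<Rightarrow> 'v set \<Rightarrow> ('v option,'e) pre_digraph" where
  "contract G S = \<lparr> verts = insert None (Some ` (verts G - S)),
     arcs = {e\<in>arcs G. \<not> (tail G e \<in> S \<and> head G e \<in> S)},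
     tail = (\<lambda>e. if tail G e \<in> S then None else Some (tail G e)),
     head = (\<lambda>e. if head G e \<in> S then None else Some (head G e)) \<rparr>"

definition sub_graph :: "('v,'e) pre_digraph \<Rightarrow> 'v set \<Rightarrow> 'v set \<Rightarrow> ('v option,'e) pre_digraph" where
  "sub_graph G S C = contract G S \<restriction> insert None (Some ` C)"

definition sub_roots :: "'v set \<Rightarrow> 'v set \<Rightarrow> 'v set \<Rightarrow> 'v option set" where
  "sub_roots Rts P C = insert None (Some ` (C \<inter> (Rts - P)))"

definition sub_terms :: "'v set \<Rightarrow> 'v set \<Rightarrow> 'v option set" where
  "sub_terms X C = Some ` (C \<inter> X)"

end

theory Submission
  imports Defs
begin

(* Every vertex of T is reached from a root along the arborescence arcs E(T) \ F.  A path of a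
   subinstance I_C starts at r_T or at a root in C; each of its arcs is an arc of G whose tail,
   when it is the contracted vertex r_T, is some vertex of T, so the path lifts to G after
   prefixing a tree path.  For the cost, the pieces are pairwise disjoint: arborescence arcs have
   both ends in T, while every arc of I_C has an end in C, and the components C are disjoint. *)

lemma equiv_uconn:
  "equiv (verts H) (uconn H (arcs H) \<inter> verts H \<times> verts H)"
proof (rule equivI)
  have "sym (uconn H (arcs H))"
    unfolding uconn_def by (rule sym_rtrancl) (auto simp: sym_def)
  then show "sym (uconn H (arcs H) \<inter> verts H \<times> verts H)"
    by (auto simp: sym_def)
  have "trans (uconn H (arcs H))"
    unfolding uconn_def by (rule trans_rtrancl)
  then show "trans (uconn H (arcs H) \<inter> verts H \<times> verts H)"
    by (auto simp: trans_def)
  show "refl_on (verts H) (uconn H (arcs H) \<inter> verts H \<times> verts H)"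
    by (auto simp: refl_on_def uconn_def)
qed auto

lemma weak_components_eq_quotient:
  "weak_components H = verts H // (uconn H (arcs H) \<inter> verts H \<times> verts H)"
proof -
  have "(uconn H (arcs H) \<inter> verts H \<times> verts H) `` {u} = {v \<in> verts H. (u, v) \<in> uconn H (arcs H)}"
    if "u \<in> verts H" for u
    using that by blast
  then show ?thesis
    unfolding weak_components_def quotient_def by blast
qed

lemma weak_components_subset: "C \<in> weak_components H \<Longrightarrow> C \<subseteq> verts H"
  by (auto simp: weak_components_def)

lemma weak_components_disjoint:
  "C \<in> weak_components H \<Longrightarrow> C' \<in> weak_components H \<Longrightarrow> C \<noteq> C' \<Longrightarrow> C \<inter> C' = {}"
  using quotient_disj[OF equiv_uconn] by (metis weak_components_eq_quotient)

lemma weak_components_cover: "v \<in> verts H \<Longrightarrow> \<exists>C\<in>weak_components H. v \<in> C"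
  using quotientI equiv_class_self[OF equiv_uconn] by (metis weak_components_eq_quotient)

lemma finite_weak_components: "finite (verts H) \<Longrightarrow> finite (weak_components H)"
  unfolding weak_components_eq_quotient by (rule finite_quotient) auto

lemma wf_digraph_arcs_update:
  "wf_digraph G \<Longrightarrow> Fs \<subseteq> arcs G \<Longrightarrow> wf_digraph (G\<lparr>arcs := Fs\<rparr>)"
  by (auto simp: wf_digraph_def)

lemma subgraph_arcs_update:
  assumes "subgraph H G" "arcs H \<subseteq> Fs" "Fs \<subseteq> arcs G"
  shows "subgraph H (G\<lparr>arcs := Fs\<rparr>)"
  using assms by (intro subgraphI) (auto simp: compatible_def intro: wf_digraph_arcs_update)

lemma reachable_closed_set:
  assumes "u \<rightarrow>\<^sup>*\<^bsub>H\<^esub> v" "u \<in> Q" "\<And>e. e \<in> arcs H \<Longrightarrow> tail H e \<in> Q \<Longrightarrow> head H e \<in> Q"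
  shows "v \<in> Q"
  using assms(1) unfolding reachable_def
  by (induct rule: rtrancl_on_induct) (use assms(2,3) in \<open>auto simp: arcs_ends_conv\<close>)

lemma tail_sub_graph [simp]:
  "tail (sub_graph G S C) e = (if tail G e \<in> S then None else Some (tail G e))"
  by (simp add: sub_graph_def contract_def)

lemma head_sub_graph [simp]:
  "head (sub_graph G S C) e = (if head G e \<in> S then None else Some (head G e))"
  by (simp add: sub_graph_def contract_def)

lemma arcs_sub_graph:
  "arcs (sub_graph G S C) = {e \<in> arcs G. \<not> (tail G e \<in> S \<and> head G e \<in> S) \<and>
     tail G e \<in> S \<union> C \<and> head G e \<in> S \<union> C}"
  by (auto simp: sub_graph_def contract_def)

lemma verts_sub_graph:
  "verts (sub_graph G S C) = insert None (Some ` C)"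
  by (auto simp: sub_graph_def contract_def)

lemma reachable_lift_sub_graph:
  assumes G: "wf_digraph G" and Fs: "Fs \<subseteq> arcs G" and C: "C \<subseteq> verts G"
    and FC: "FC \<subseteq> arcs (sub_graph G S C)" "FC \<subseteq> Fs"
    and S: "\<And>s. s \<in> S \<Longrightarrow> \<exists>r\<in>R. r \<rightarrow>\<^sup>*\<^bsub>G\<lparr>arcs := Fs\<rparr>\<^esub> s"
    and root: "\<rho> \<in> insert None (Some ` R)"
    and reach: "\<rho> \<rightarrow>\<^sup>*\<^bsub>(sub_graph G S C)\<lparr>arcs := FC\<rparr>\<^esub> Some v"
  shows "\<exists>r\<in>R. r \<rightarrow>\<^sup>*\<^bsub>G\<lparr>arcs := Fs\<rparr>\<^esub> v"
proof -
  let ?H = "(sub_graph G S C)\<lparr>arcs := FC\<rparr>"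
  interpret G': wf_digraph "G\<lparr>arcs := Fs\<rparr>"
    using G Fs by (rule wf_digraph_arcs_update)
  \<comment> \<open>r_T = None counts as reached, since all of S is\<close>
  define Q where "Q = insert None (Some ` {v. \<exists>r\<in>R. r \<rightarrow>\<^sup>*\<^bsub>G\<lparr>arcs := Fs\<rparr>\<^esub> v})"
  have "\<rho> \<in> verts (sub_graph G S C)"
    using reach by (auto elim: reachable_in_vertsE)
  have "\<rho> \<in> Q"
  proof (cases \<rho>)
    case (Some r)
    with root C \<open>\<rho> \<in> verts (sub_graph G S C)\<close> have "r \<in> R" "r \<in> verts G"
      by (auto simp: verts_sub_graph)
    moreover from \<open>r \<in> verts G\<close> have "r \<rightarrow>\<^sup>*\<^bsub>G\<lparr>arcs := Fs\<rparr>\<^esub> r"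
      by simp
    ultimately have "\<exists>r'\<in>R. r' \<rightarrow>\<^sup>*\<^bsub>G\<lparr>arcs := Fs\<rparr>\<^esub> r"
      by blast
    then show ?thesis
      by (simp add: Q_def Some inj_image_mem_iff)
  qed (simp add: Q_def)
  moreover have "head ?H e \<in> Q" if e: "e \<in> arcs ?H" and tl: "tail ?H e \<in> Q" for e
  proof -
    have "\<exists>r\<in>R. r \<rightarrow>\<^sup>*\<^bsub>G\<lparr>arcs := Fs\<rparr>\<^esub> tail G e"
      using S tl by (cases "tail G e \<in> S") (auto simp: Q_def)
    moreover have "tail G e \<rightarrow>\<^bsub>G\<lparr>arcs := Fs\<rparr>\<^esub> head G e"
      using e FC by (auto simp: arcs_ends_conv intro: rev_image_eqI)
    ultimately show ?thesis
      by (auto simp: Q_def intro: G'.reachable_adj_trans)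
  qed
  ultimately have "Some v \<in> Q"
    using reachable_closed_set[OF reach] by blast
  then show ?thesis
    by (simp add: Q_def inj_image_mem_iff)
qed

lemma mrdst_feasible_from_subinstances:
  assumes G: "wf_digraph G" and X: "X \<subseteq> verts G" and Fs: "Fs \<subseteq> arcs G"
    and S: "\<And>s. s \<in> S \<Longrightarrow> \<exists>r\<in>R. r \<rightarrow>\<^sup>*\<^bsub>G\<lparr>arcs := Fs\<rparr>\<^esub> s"
    and sub: "\<And>C. C \<in> weak_components (del_verts G S) \<Longrightarrow>
      mrdst_feasible (sub_graph G S C) (sub_roots R P C) (sub_terms X C) (FC C) \<and> FC C \<subseteq> Fs"
  shows "mrdst_feasible G R X Fs"
  unfolding mrdst_feasible_def
proof (intro conjI ballI Fs)
  fix x assume x: "x \<in> X"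
  show "\<exists>r\<in>R. r \<rightarrow>\<^sup>*\<^bsub>G\<lparr>arcs := Fs\<rparr>\<^esub> x"
  proof (cases "x \<in> S")
    case False
    with x X obtain C where C: "C \<in> weak_components (del_verts G S)" and "x \<in> C"
      using weak_components_cover[of x "del_verts G S"] by (auto simp: del_verts_def)
    have CG: "C \<subseteq> verts G"
      using weak_components_subset[OF C] by (auto simp: del_verts_def)
    from sub[OF C] have FC: "FC C \<subseteq> arcs (sub_graph G S C)" "FC C \<subseteq> Fs"
      and "\<exists>\<rho>\<in>sub_roots R P C. \<rho> \<rightarrow>\<^sup>*\<^bsub>(sub_graph G S C)\<lparr>arcs := FC C\<rparr>\<^esub> Some x"
      using x \<open>x \<in> C\<close> by (auto simp: mrdst_feasible_def sub_terms_def)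
    from this(3) obtain \<rho> where "\<rho> \<in> sub_roots R P C"
      and reach: "\<rho> \<rightarrow>\<^sup>*\<^bsub>(sub_graph G S C)\<lparr>arcs := FC C\<rparr>\<^esub> Some x" ..
    then have "\<rho> \<in> insert None (Some ` R)"
      by (auto simp: sub_roots_def)
    from reachable_lift_sub_graph[OF G Fs CG FC S this reach] show ?thesis .
  qed (rule S)
qed

lemma cost_Un_UNION_disjoint:
  assumes "finite A" "finite I" "\<And>i. i \<in> I \<Longrightarrow> finite (B i)"
    and "A \<inter> (\<Union>i\<in>I. B i) = {}"
    and "\<And>i j. i \<in> I \<Longrightarrow> j \<in> I \<Longrightarrow> i \<noteq> j \<Longrightarrow> B i \<inter> B j = {}"
  shows "cost c (A \<union> (\<Union>i\<in>I. B i)) = cost c A + (\<Sum>i\<in>I. cost c (B i))"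
  unfolding cost_def using assms
  by (simp add: sum.union_disjoint sum.UNION_disjoint)

lemma cost_from_subinstances:
  assumes G: "fin_digraph G"
    and TA: "\<And>e. e \<in> TA \<Longrightarrow> e \<in> arcs G \<and> tail G e \<in> S \<and> head G e \<in> S"
    and FC: "\<And>C. C \<in> weak_components (del_verts G S) \<Longrightarrow> FC C \<subseteq> arcs (sub_graph G S C)"
  shows "cost c (TA \<union> (\<Union>C\<in>weak_components (del_verts G S). FC C))
    = cost c TA + (\<Sum>C\<in>weak_components (del_verts G S). cost c (FC C))"
proof (rule cost_Un_UNION_disjoint)
  let ?W = "weak_components (del_verts G S)"
  interpret fin_digraph G by (rule G)
  have W_S: "C \<inter> S = {}" if "C \<in> ?W" for C
    using weak_components_subset[OF that] by (auto simp: del_verts_def)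
  show "finite TA"
    using TA by (blast intro: finite_subset[OF _ finite_arcs])
  show "finite ?W"
    by (rule finite_weak_components) (simp add: del_verts_def)
  show "finite (FC C)" if "C \<in> ?W" for C
    using FC[OF that] by (rule finite_subset) (auto simp: arcs_sub_graph)
  show "TA \<inter> (\<Union>C\<in>?W. FC C) = {}"
    using TA FC unfolding arcs_sub_graph by blast
  show "FC C \<inter> FC C' = {}" if C: "C \<in> ?W" "C' \<in> ?W" "C \<noteq> C'" for C C'
  proof -
    have "C \<inter> C' \<noteq> {}" if e: "e \<in> FC C" "e \<in> FC C'" for e
      using FC[OF C(1)] FC[OF C(2)] e W_S[OF C(1)] W_S[OF C(2)]
      unfolding arcs_sub_graph by blast
    then show ?thesis
      using weak_components_disjoint[OF C] by blast
  qed
qed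

lemma mr_partial_arbD:
  assumes "mr_partial_arb G Rts P A F" and "p \<in> P"
  shows "p \<in> Rts" "partial_arb G (A p) p" "F \<inter> arcs (A p) = {}"
  using assms unfolding mr_partial_arb_def by (metis subsetD)+

lemma mr_partial_arb_tree_arcs:
  assumes "mr_partial_arb G Rts P A F"
  shows "arcs (mr_graph G P A F) - F = (\<Union>p\<in>P. arcs (A p))"
  using mr_partial_arbD(3)[OF assms] unfolding mr_graph_def by (simp; blast)

lemma mr_partial_arb_tree_arc_ends:
  assumes T: "mr_partial_arb G Rts P A F" and e: "e \<in> arcs (mr_graph G P A F) - F"
  shows "e \<in> arcs G \<and> tail G e \<in> verts (mr_graph G P A F) \<and> head G e \<in> verts (mr_graph G P A F)"
proof -
  obtain p where p: "p \<in> P" and e: "e \<in> arcs (A p)"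
    using e mr_partial_arb_tree_arcs[OF T] by auto
  have "subgraph (A p) G"
    using mr_partial_arbD(2)[OF T p] by (simp add: partial_arb_def)
  then have wf: "wf_digraph (A p)" and "compatible G (A p)" and "arcs (A p) \<subseteq> arcs G"
    by auto
  then have "e \<in> arcs G" "tail G e \<in> verts (A p)" "head G e \<in> verts (A p)"
    using e wf_digraph.tail_in_verts[OF wf e] wf_digraph.head_in_verts[OF wf e]
    by (auto simp: compatible_def)
  with p show ?thesis
    by (auto simp: mr_graph_def)
qed

lemma mr_partial_arb_reachable:
  assumes T: "mr_partial_arb G Rts P A F"
    and Fs: "arcs (mr_graph G P A F) - F \<subseteq> Fs" "Fs \<subseteq> arcs G"
    and v: "v \<in> verts (mr_graph G P A F)"
  shows "\<exists>r\<in>Rts. r \<rightarrow>\<^sup>*\<^bsub>G\<lparr>arcs := Fs\<rparr>\<^esub> v"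
proof -
  obtain p where p: "p \<in> P" and v: "v \<in> verts (A p)"
    using v by (auto simp: mr_graph_def)
  have arb: "partial_arb G (A p) p"
    by (rule mr_partial_arbD(2)[OF T p])
  have "arcs (A p) \<subseteq> Fs"
    using Fs(1) mr_partial_arb_tree_arcs[OF T] p by blast
  with arb Fs(2) have "subgraph (A p) (G\<lparr>arcs := Fs\<rparr>)"
    unfolding partial_arb_def by (blast intro: subgraph_arcs_update)
  moreover have "p \<rightarrow>\<^sup>*\<^bsub>A p\<^esub> v"
    using arb v unfolding partial_arb_def by blast
  ultimately have "p \<rightarrow>\<^sup>*\<^bsub>G\<lparr>arcs := Fs\<rparr>\<^esub> v"
    by (blast intro: pre_digraph.reachable_mono)
  with mr_partial_arbD(1)[OF T p] show ?thesis ..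
qed

theorem lemma4:
  fixes G :: "('v,'e) pre_digraph" and c :: "'e \<Rightarrow> real"
    and Rts X P :: "'v set" and A :: "'v \<Rightarrow> ('v,'e) pre_digraph" and F :: "'e set"
    and FC :: "'v set \<Rightarrow> 'e set"
  assumes inst: "mrdst_instance G c Rts X"
    and plan: "planar G"
    and T: "mr_partial_arb G Rts P A F"
    and sol: "\<forall>C\<in>weak_components (del_verts G (verts (mr_graph G P A F))).
       mrdst_feasible (sub_graph G (verts (mr_graph G P A F)) C)
         (sub_roots Rts P C) (sub_terms X C) (FC C)"
  shows "mrdst_feasible G Rts X
           ((arcs (mr_graph G P A F) - F) \<union>
            (\<Union>C\<in>weak_components (del_verts G (verts (mr_graph G P A F))). FC C))
       \<and> cost c ((arcs (mr_graph G P A F) - F) \<union>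
            (\<Union>C\<in>weak_components (del_verts G (verts (mr_graph G P A F))). FC C))
         = cost c (arcs (mr_graph G P A F) - F)
           + (\<Sum>C\<in>weak_components (del_verts G (verts (mr_graph G P A F))). cost c (FC C))"
proof -
  define S where "S = verts (mr_graph G P A F)"
  define TA where "TA = arcs (mr_graph G P A F) - F"
  define W where "W = weak_components (del_verts G S)"
  define Fs where "Fs = TA \<union> (\<Union>C\<in>W. FC C)"
  have G: "fin_digraph G" and X: "X \<subseteq> verts G"
    using inst by (auto simp: mrdst_instance_def)
  have TA_ends: "\<And>e. e \<in> TA \<Longrightarrow> e \<in> arcs G \<and> tail G e \<in> S \<and> head G e \<in> S"
    unfolding TA_def S_def by (rule mr_partial_arb_tree_arc_ends[OF T])
  have FC: "\<And>C. C \<in> W \<Longrightarrow> FC C \<subseteq> arcs (sub_graph G S C)"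
    using sol by (simp add: W_def S_def mrdst_feasible_def)
  have Fs: "Fs \<subseteq> arcs G"
    using TA_ends FC by (auto simp: Fs_def arcs_sub_graph)
  have "mrdst_feasible G Rts X Fs"
  proof (rule mrdst_feasible_from_subinstances[OF fin_digraph.axioms(1)[OF G] X Fs])
    show "\<exists>r\<in>Rts. r \<rightarrow>\<^sup>*\<^bsub>G\<lparr>arcs := Fs\<rparr>\<^esub> s" if "s \<in> S" for s
      using mr_partial_arb_reachable[OF T _ Fs] that by (simp add: S_def TA_def Fs_def)
    show "mrdst_feasible (sub_graph G S C) (sub_roots Rts P C) (sub_terms X C) (FC C) \<and> FC C \<subseteq> Fs"
      if "C \<in> weak_components (del_verts G S)" for C
      using sol that by (auto simp: S_def Fs_def W_def)
  qed
  moreover have "cost c Fs = cost c TA + (\<Sum>C\<in>W. cost c (FC C))"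
    unfolding Fs_def W_def by (rule cost_from_subinstances[OF G TA_ends FC[unfolded W_def]])
  ultimately show ?thesis
    by (simp add: Fs_def TA_def W_def S_def)
qed

end
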